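(* Let $X \subset \mathbb{Z}^n$ and let $(X,d,c_1)$ be a digital metric space that is $c_1$-connected, where $d$ is any $\ell_p$ metric on $\mathbb{Z}^n$ ($1 \le p \le \infty$). Let $f: X \to X$ be a digital contraction map. Then $f$ is a constant function.
   Context: For $p,q \in \mathbb{Z}^n$, $p \neq q$, and $1 \le u \le n$, $p$ and $q$ are $c_u$-adjacent if $|p_i - q_i| = 1$ for at most $u$ indices $i$ and $p_j = q_j$ for all other indices $j$. A digital metric space is a triple $(X,d,\kappa)$ with $X\subset\mathbb{Z}^n$, $\kappa$ an adjacency on $X$ and $d$ a metric on $X$. The $\ell_p$ metric is $d(x,y) = (\sum_{i=1}^n |x_i-y_i|^p)^{1/p}$ for $1 \le p<\infty$ and $d(x,y) = \max_i |x_i - y_i|$ for $p=\infty$. $X$ is $c_1$-connected if any two points are joined by a finite sequence of points of $X$ with consecutive points equal or $c_1$-adjacent. $f$ is a digital contraction map if there is $\alpha \in (0,1)$ with $d(f(x),f(y)) \le \alpha\, d(x,y)$ for all $x,y \in X$. *)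

theory Defs
  imports "HOL-Analysis.Analysis" "HOL-Library.Extended_Real"
begin

text \<open>Points of Z^n are vectors int^'n, for a finite index type 'n with CARD('n) = n.\<close>

definition lp_dist :: "ereal \<Rightarrow> int^'n \<Rightarrow> int^'n \<Rightarrow> real" where
  "lp_dist p x y =
     (if p = \<infinity> then Max (range (\<lambda>i. real_of_int \<bar>x$i - y$i\<bar>))
      else (\<Sum>i\<in>UNIV. real_of_int \<bar>x$i - y$i\<bar> powr real_of_ereal p) powr (1 / real_of_ereal p))"

definition c_adj :: "nat \<Rightarrow> int^'n \<Rightarrow> int^'n \<Rightarrow> bool" where
  "c_adj u p q \<longleftrightarrow> p \<noteq> q \<and> card {i. \<bar>p$i - q$i\<bar> = 1} \<le> u
      \<and> (\<forall>j. \<bar>p$j - q$j\<bar> \<noteq> 1 \<longrightarrow> p$j = q$j)"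

definition adj_connected :: "('a \<Rightarrow> 'a \<Rightarrow> bool) \<Rightarrow> 'a set \<Rightarrow> bool" where
  "adj_connected \<kappa> X \<longleftrightarrow>
     (\<forall>x\<in>X. \<forall>y\<in>X. \<exists>ps. ps \<noteq> [] \<and> hd ps = x \<and> last ps = y \<and> set ps \<subseteq> X \<and>
        (\<forall>i. Suc i < length ps \<longrightarrow> ps!i = ps!Suc i \<or> \<kappa> (ps!i) (ps!Suc i)))"

definition digital_contraction :: "('a \<Rightarrow> 'a \<Rightarrow> real) \<Rightarrow> 'a set \<Rightarrow> ('a \<Rightarrow> 'a) \<Rightarrow> bool" where
  "digital_contraction d X f \<longleftrightarrow>
     (\<exists>\<alpha>::real. 0 < \<alpha> \<and> \<alpha> < 1 \<and> (\<forall>x\<in>X. \<forall>y\<in>X. d (f x) (f y) \<le> \<alpha> * d x y))"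

end

theory Submission
  imports Defs
begin

text \<open>Distinct points of \<open>\<int>\<^sup>n\<close> are at \<open>\<ell>\<^sub>p\<close>-distance at least 1, while \<open>c\<^sub>1\<close>-adjacent
  points are at distance at most 1. A contraction with factor \<open>\<alpha> < 1\<close> therefore maps
  adjacent points to points at distance \<open>\<le> \<alpha> < 1\<close>, i.e. to the same point, and
  \<open>c\<^sub>1\<close>-connectedness propagates this along paths to all of \<open>X\<close>.\<close>

lemma lp_dist_infinity:
  "lp_dist \<infinity> x y = Max (range (\<lambda>i. real_of_int \<bar>x$i - y$i\<bar>))"
  by (simp add: lp_dist_def)

lemma lp_dist_finite:
  assumes "p \<noteq> \<infinity>"
  shows "lp_dist p x y =
    (\<Sum>i\<in>UNIV. real_of_int \<bar>x$i - y$i\<bar> powr real_of_ereal p) powr (1 / real_of_ereal p)"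
  using assms by (simp add: lp_dist_def)

lemma real_of_ereal_ge_1:
  assumes "1 \<le> p" "p \<noteq> \<infinity>"
  shows "1 \<le> real_of_ereal p"
  using assms by (cases p) auto

lemma lp_dist_ge_1:
  fixes x y :: "int^'n"
  assumes "1 \<le> p" "x \<noteq> y"
  shows "1 \<le> lp_dist p x y"
proof -
  obtain i where "x$i \<noteq> y$i"
    using assms(2) by (metis vec_eq_iff)
  then have diff_i: "1 \<le> real_of_int \<bar>x$i - y$i\<bar>"
    by linarith
  show ?thesis
  proof (cases "p = \<infinity>")
    case True
    have "real_of_int \<bar>x$i - y$i\<bar> \<le> Max (range (\<lambda>i. real_of_int \<bar>x$i - y$i\<bar>))"
      by (rule Max_ge) auto
    moreover from True have "lp_dist p x y = Max (range (\<lambda>i. real_of_int \<bar>x$i - y$i\<bar>))"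
      by (simp only: lp_dist_infinity)
    ultimately show ?thesis
      using diff_i by linarith
  next
    case False
    define r where "r = real_of_ereal p"
    have "1 \<le> r"
      unfolding r_def using assms(1) False by (rule real_of_ereal_ge_1)
    have "1 \<le> real_of_int \<bar>x$i - y$i\<bar> powr r"
      using diff_i \<open>1 \<le> r\<close> by (simp add: ge_one_powr_ge_zero)
    also have "\<dots> \<le> (\<Sum>j\<in>UNIV. real_of_int \<bar>x$j - y$j\<bar> powr r)"
      by (rule member_le_sum) auto
    finally have "1 \<le> (\<Sum>j\<in>UNIV. real_of_int \<bar>x$j - y$j\<bar> powr r) powr (1 / r)"
      using \<open>1 \<le> r\<close> by (simp add: ge_one_powr_ge_zero)
    also have "\<dots> = lp_dist p x y"
      unfolding r_def using False by (rule lp_dist_finite[symmetric])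
    finally show ?thesis .
  qed
qed

lemma lp_dist_c1_adj_le_1:
  fixes x y :: "int^'n"
  assumes "1 \<le> p" "c_adj 1 x y"
  shows "lp_dist p x y \<le> 1"
proof -
  define A where "A = {i. \<bar>x$i - y$i\<bar> = 1}"
  have "card A \<le> 1" and eq_outside_A: "\<And>j. j \<notin> A \<Longrightarrow> x$j = y$j"
    using assms(2) unfolding c_adj_def A_def by auto
  show ?thesis
  proof (cases "p = \<infinity>")
    case True
    have "real_of_int \<bar>x$j - y$j\<bar> \<le> 1" for j
      using eq_outside_A[of j] by (cases "j \<in> A") (auto simp: A_def)
    then have "Max (range (\<lambda>i. real_of_int \<bar>x$i - y$i\<bar>)) \<le> 1"
      by (subst Max_le_iff) auto
    with True show ?thesis
      by (simp only: lp_dist_infinity)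
  next
    case False
    define r where "r = real_of_ereal p"
    have "1 \<le> r"
      unfolding r_def using assms(1) False by (rule real_of_ereal_ge_1)
    have term_eq: "real_of_int \<bar>x$j - y$j\<bar> powr r = (if j \<in> A then 1 else 0)" for j
      using eq_outside_A[of j] by (cases "j \<in> A") (auto simp: A_def)
    have "(\<Sum>j\<in>UNIV. real_of_int \<bar>x$j - y$j\<bar> powr r) = real (card A)"
      unfolding term_eq by (simp add: sum.If_cases)
    with \<open>card A \<le> 1\<close> have sum_le_1: "(\<Sum>j\<in>UNIV. real_of_int \<bar>x$j - y$j\<bar> powr r) \<le> 1"
      by simp
    have "lp_dist p x y = (\<Sum>j\<in>UNIV. real_of_int \<bar>x$j - y$j\<bar> powr r) powr (1 / r)"
      unfolding r_def using False by (rule lp_dist_finite)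
    also have "\<dots> \<le> 1 powr (1 / r)"
      using sum_le_1 \<open>1 \<le> r\<close> by (intro powr_mono2) (auto intro: sum_nonneg)
    also have "\<dots> = 1"
      by simp
    finally show ?thesis .
  qed
qed

lemma digital_contraction_eq_if_dist_le_1:
  assumes "digital_contraction d X f"
    and sep: "\<And>u v. u \<noteq> v \<Longrightarrow> 1 \<le> d u v"
    and "x \<in> X" "y \<in> X" "d x y \<le> 1"
  shows "f x = f y"
proof (rule ccontr)
  assume "f x \<noteq> f y"
  obtain \<alpha> where "0 < \<alpha>" "\<alpha> < 1" "d (f x) (f y) \<le> \<alpha> * d x y"
    using assms(1,3,4) unfolding digital_contraction_def by blast
  have "1 \<le> d (f x) (f y)"
    using sep \<open>f x \<noteq> f y\<close> .
  also have "\<dots> \<le> \<alpha> * d x y" by fact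
  also have "\<dots> \<le> \<alpha>"
    using \<open>d x y \<le> 1\<close> \<open>0 < \<alpha>\<close> mult_left_mono[of "d x y" 1 \<alpha>] by simp
  finally show False
    using \<open>\<alpha> < 1\<close> by simp
qed

lemma adj_connected_constant:
  assumes "adj_connected \<kappa> X"
    and adj_eq: "\<And>x y. x \<in> X \<Longrightarrow> y \<in> X \<Longrightarrow> \<kappa> x y \<Longrightarrow> g x = g y"
  shows "\<exists>c. \<forall>x\<in>X. g x = c"
proof -
  have same: "g x = g y" if "x \<in> X" "y \<in> X" for x y
  proof -
    obtain ps where ps: "ps \<noteq> []" "hd ps = x" "last ps = y" "set ps \<subseteq> X"
      and steps: "\<And>i. Suc i < length ps \<Longrightarrow> ps!i = ps!Suc i \<or> \<kappa> (ps!i) (ps!Suc i)"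
      using assms(1) \<open>x \<in> X\<close> \<open>y \<in> X\<close> unfolding adj_connected_def by blast
    have "i < length ps \<Longrightarrow> g (ps!i) = g (ps!0)" for i
    proof (induction i)
      case 0
      show ?case by simp
    next
      case (Suc i)
      have "ps!i \<in> X" "ps!Suc i \<in> X"
        using Suc.prems ps(4) by (auto dest: nth_mem)
      then have "g (ps!i) = g (ps!Suc i)"
        using steps[OF Suc.prems] adj_eq by auto
      with Suc show ?case by simp
    qed
    from this[of "length ps - 1"] ps show ?thesis
      by (simp add: hd_conv_nth last_conv_nth)
  qed
  show ?thesis
  proof (cases "X = {}")
    case False
    then obtain x0 where "x0 \<in> X"
      by blast
    with same show ?thesis
      by blast
  qed simp
qed

theorem mainTheorem4:
  fixes X :: "(int^'n) set" and f :: "int^'n \<Rightarrow> int^'n" and p :: ereal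
  assumes "1 \<le> p"
    and "adj_connected (c_adj 1) X"
    and "f ` X \<subseteq> X"
    and "digital_contraction (lp_dist p) X f"
  shows "\<exists>c. \<forall>x\<in>X. f x = c"
  using assms(2)
proof (rule adj_connected_constant)
  fix x y
  assume "x \<in> X" "y \<in> X" "c_adj 1 x y"
  from assms(4) lp_dist_ge_1[OF assms(1)] \<open>x \<in> X\<close> \<open>y \<in> X\<close>
    lp_dist_c1_adj_le_1[OF assms(1) \<open>c_adj 1 x y\<close>]
  show "f x = f y"
    by (rule digital_contraction_eq_if_dist_le_1)
qed

end
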